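(* For every $\lambda\in\Omega=\{\lambda\in\mathbb D:\ 0\le\mathrm{Re}(\lambda)\le|\lambda|^2-\tfrac12\}$ there exist $a>1$ and $b>2^{-1/2}$ such that $R_{a,b}\subset(\lambda R_{a,b}-1)\cup(\lambda R_{a,b}+1)$.
   Context: $\mathbb D$ is the open unit disc. For $a,b>0$, $R_{a,b}\subset\mathbb C$ is the closed rectangle centered at $0$ with vertices $\pm a\pm ib$; $\lambda E+c=\{\lambda z+c:z\in E\}$. *)

theory Defs
  imports "HOL-Analysis.Analysis"
begin

definition rect :: "real \<Rightarrow> real \<Rightarrow> complex set" where
  "rect a b = {z. \<bar>Re z\<bar> \<le> a \<and> \<bar>Im z\<bar> \<le> b}"

definition affimg :: "complex \<Rightarrow> complex set \<Rightarrow> complex \<Rightarrow> complex set" where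
  "affimg l E c = (\<lambda>z. l * z + c) ` E"

definition Omega :: "complex set" where
  "Omega = {l. norm l < 1 \<and> 0 \<le> Re l \<and> Re l \<le> (norm l)^2 - 1/2}"

end

(*
  Write l = x + i t with t > 0 (the case t < 0 follows by complex conjugation, and t = 0 is
  excluded by the definition of Omega), r = |l|^2, and take a = (1 + x)/r, b = t/r.
  The line through 0 in direction l cuts R_{a,b} into two halves exchanged by z |-> -z.
  For z in the half where Im (z conj l) <= 0, the four linear bounds saying that
  (z - 1)/l = (z - 1) conj l / r lies in R_{a,b} follow from 0 <= x and 1 + 2x <= 2r, so that
  half lies in l R_{a,b} + 1 and the other half in l R_{a,b} - 1.  Finally r < 1 gives a > 1,
  and x <= r - 1/2 forces t^2 = r - x^2 > r^2/2, i.e. b > 2^(-1/2).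
*)
theory Submission
  imports Defs
begin

lemma rect_uminus_image: "uminus ` rect a b = rect a b"
  by (force simp: rect_def intro: image_eqI[where x = "- _"])

lemma rect_cnj_image: "cnj ` rect a b = rect a b"
  by (force simp: rect_def intro: image_eqI[where x = "cnj _"])

lemma mem_affimg_iff:
  assumes "l \<noteq> 0"
  shows "z \<in> affimg l E c \<longleftrightarrow> (z - c) / l \<in> E"
  using assms by (force simp: affimg_def field_simps intro: image_eqI[where x = "(z - c) / l"])

lemma uminus_image_affimg: "uminus ` affimg l E c = affimg l (uminus ` E) (- c)"
  by (auto simp: affimg_def image_image)

lemma cnj_image_affimg: "cnj ` affimg l E c = affimg (cnj l) (cnj ` E) (cnj c)"
  by (auto simp: affimg_def image_image)

text \<open>Here \<open>p + i q\<close> is \<open>z\<close> and \<open>x + i t\<close> is \<open>l\<close>; the two bounded quantities are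
  \<open>r Re ((z - 1) / l)\<close> and \<open>r Im ((z - 1) / l)\<close>.\<close>
lemma half_rect_bounds:
  fixes x t p q :: real
  defines "r \<equiv> x\<^sup>2 + t\<^sup>2"
  assumes x: "x \<ge> 0" and t: "t > 0" and xr: "1 + 2 * x \<le> 2 * r"
    and p: "\<bar>p\<bar> \<le> (1 + x) / r" and q: "\<bar>q\<bar> \<le> t / r" and qp: "q * x \<le> p * t"
  shows "\<bar>(p - 1) * x + q * t\<bar> \<le> 1 + x" and "\<bar>q * x - (p - 1) * t\<bar> \<le> t"
proof -
  have r: "r > 0" using t by (simp add: r_def add_nonneg_pos)
  have pr: "\<bar>p * r\<bar> \<le> 1 + x" and qr: "\<bar>q * r\<bar> \<le> t"
    using p q r by (simp_all add: abs_mult pos_le_divide_eq)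
  have "r * ((p - 1) * x + q * t) = (p * r) * x + (q * r) * t - r * x"
    by (simp add: algebra_simps)
  also have "\<dots> \<le> (1 + x) * x + t * t - r * x"
    using pr qr x t by (intro diff_right_mono add_mono mult_right_mono) auto
  also have "\<dots> = x + r - r * x"
    by (simp add: r_def algebra_simps power2_eq_square)
  also have "\<dots> \<le> r * (1 + x)"
    using mult_left_mono[of 1 "2 * r" x] x xr by (simp add: algebra_simps)
  finally have upper: "(p - 1) * x + q * t \<le> 1 + x"
    using r by (simp add: mult_le_cancel_left_pos)
  have "t * ((p - 1) * x + q * t + (1 + x)) \<ge> x * (q * x) + t * (q * t) + t"
    using mult_left_mono[OF qp x] by (simp add: algebra_simps)
  also have "x * (q * x) + t * (q * t) + t = q * r + t"
    by (simp add: r_def algebra_simps power2_eq_square)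
  also have "\<dots> \<ge> 0" using qr by linarith
  finally have lower: "(p - 1) * x + q * t \<ge> - (1 + x)"
    using t by (simp add: zero_le_mult_iff)
  show "\<bar>(p - 1) * x + q * t\<bar> \<le> 1 + x" using upper lower by linarith
  have "r * (q * x - (p - 1) * t + t) = (q * r) * x - (p * r) * t + 2 * r * t"
    by (simp add: algebra_simps)
  also have "\<dots> \<ge> - t * x - (1 + x) * t + 2 * r * t"
    using pr qr x t by (intro add_right_mono diff_mono mult_right_mono) auto
  also have "- t * x - (1 + x) * t + 2 * r * t = t * (2 * r - (1 + 2 * x))"
    by (simp add: algebra_simps)
  also have "\<dots> \<ge> 0" using t xr by simp
  finally have "q * x - (p - 1) * t \<ge> - t"
    using r by (simp add: zero_le_mult_iff)
  then show "\<bar>q * x - (p - 1) * t\<bar> \<le> t" using qp by (simp add: abs_le_iff left_diff_distrib)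
qed

lemma divide_sub_one_in_rect:
  fixes l z :: complex
  defines "a \<equiv> (1 + Re l) / (cmod l)\<^sup>2" and "b \<equiv> Im l / (cmod l)\<^sup>2"
  assumes x: "Re l \<ge> 0" and t: "Im l > 0" and xr: "1 + 2 * Re l \<le> 2 * (cmod l)\<^sup>2"
    and z: "z \<in> rect a b" and half: "Im (z * cnj l) \<le> 0"
  shows "(z - 1) / l \<in> rect a b"
proof -
  have r: "(cmod l)\<^sup>2 = (Re l)\<^sup>2 + (Im l)\<^sup>2" by (rule cmod_power2)
  have "Im z * Re l \<le> Re z * Im l" using half by simp
  from half_rect_bounds[OF x t xr[unfolded r], folded r, of "Re z" "Im z", OF _ _ this] z
  have "\<bar>(Re z - 1) * Re l + Im z * Im l\<bar> \<le> 1 + Re l"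
    and "\<bar>Im z * Re l - (Re z - 1) * Im l\<bar> \<le> Im l"
    by (simp_all add: rect_def a_def b_def)
  then show ?thesis
    by (simp add: rect_def a_def b_def Re_divide' Im_divide' divide_right_mono)
qed

lemma rect_subset_affimg_union:
  fixes l :: complex
  defines "a \<equiv> (1 + Re l) / (cmod l)\<^sup>2" and "b \<equiv> Im l / (cmod l)\<^sup>2"
  assumes x: "Re l \<ge> 0" and t: "Im l > 0" and xr: "1 + 2 * Re l \<le> 2 * (cmod l)\<^sup>2"
  shows "rect a b \<subseteq> affimg l (rect a b) (- 1) \<union> affimg l (rect a b) 1"
proof
  fix z assume z: "z \<in> rect a b"
  have l: "l \<noteq> 0" using t by auto
  note right_half = divide_sub_one_in_rect[OF x t xr, folded a_def b_def]
  show "z \<in> affimg l (rect a b) (- 1) \<union> affimg l (rect a b) 1"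
  proof (cases "Im (z * cnj l) \<le> 0")
    case True
    then have "z \<in> affimg l (rect a b) 1"
      using right_half[OF z] mem_affimg_iff[OF l] by simp
    then show ?thesis ..
  next
    case False
    have "- z \<in> rect a b" using z rect_uminus_image by blast
    with False have "- z \<in> affimg l (rect a b) 1"
      using right_half mem_affimg_iff[OF l] by simp
    then have "z \<in> uminus ` affimg l (rect a b) 1"
      by (metis image_eqI minus_minus)
    then have "z \<in> affimg l (rect a b) (- 1)"
      by (simp add: uminus_image_affimg rect_uminus_image)
    then show ?thesis ..
  qed
qed

lemma Omega_Im_nonzero:
  assumes "l \<in> Omega"
  shows "Im l \<noteq> 0"
proof
  assume "Im l = 0"
  then have "cmod l = \<bar>Re l\<bar>" by (simp add: cmod_def)
  with assms have "0 \<le> Re l" "Re l < 1" "Re l \<le> (Re l)\<^sup>2 - 1/2"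
    by (auto simp: Omega_def)
  moreover from calculation have "(Re l)\<^sup>2 \<le> Re l"
    by (simp add: power2_eq_square mult_left_le)
  ultimately show False by simp
qed

lemma Omega_rect_params:
  assumes "l \<in> Omega"
  shows "(1 + Re l) / (cmod l)\<^sup>2 > 1" and "\<bar>Im l\<bar> / (cmod l)\<^sup>2 > 1 / sqrt 2"
proof -
  define r where "r = (cmod l)\<^sup>2"
  have x: "0 \<le> Re l" "Re l \<le> r - 1/2" and "cmod l < 1"
    using assms by (auto simp: Omega_def r_def)
  then have r: "1/2 \<le> r" "r < 1"
    by (auto simp: r_def power_less_one_iff)
  then show "(1 + Re l) / (cmod l)\<^sup>2 > 1"
    using x by (simp flip: r_def)
  have "(Re l)\<^sup>2 \<le> (r - 1/2)\<^sup>2" using x by (simp add: power_mono)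
  moreover have "r * 1 < r * (4 - 3 * r)" using r by (intro mult_strict_left_mono) auto
  moreover have "r = (Re l)\<^sup>2 + (Im l)\<^sup>2" by (simp add: r_def cmod_power2)
  ultimately have "r\<^sup>2 < 2 * (Im l)\<^sup>2"
    using r by (simp add: algebra_simps power2_eq_square)
  then have "1/2 < (\<bar>Im l\<bar> / r)\<^sup>2"
    using r by (simp add: field_simps)
  then have "sqrt (1/2) < \<bar>Im l\<bar> / r"
    using r by (intro real_less_lsqrt) auto
  then show "\<bar>Im l\<bar> / (cmod l)\<^sup>2 > 1 / sqrt 2"
    by (simp add: r_def real_sqrt_divide)
qed

theorem mainTheorem12:
  assumes "l \<in> Omega"
  shows "\<exists>a b::real. a > 1 \<and> b > 1 / sqrt 2 \<and>
           rect a b \<subseteq> affimg l (rect a b) (-1) \<union> affimg l (rect a b) 1"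
proof -
  define a b where "a = (1 + Re l) / (cmod l)\<^sup>2" and "b = \<bar>Im l\<bar> / (cmod l)\<^sup>2"
  have "a > 1" "b > 1 / sqrt 2"
    using Omega_rect_params[OF assms] by (simp_all add: a_def b_def)
  moreover have "rect a b \<subseteq> affimg l (rect a b) (-1) \<union> affimg l (rect a b) 1"
  proof (cases "Im l > 0")
    case True
    then show ?thesis
      using assms rect_subset_affimg_union[of l] by (simp add: Omega_def a_def b_def)
  next
    case False
    then have "Im (cnj l) > 0" using Omega_Im_nonzero[OF assms] by simp
    then have "rect a b \<subseteq> affimg (cnj l) (rect a b) (-1) \<union> affimg (cnj l) (rect a b) 1"
      using assms False rect_subset_affimg_union[of "cnj l"] by (simp add: Omega_def a_def b_def)
    then have "cnj ` rect a b \<subseteq> cnj ` (affimg (cnj l) (rect a b) (-1) \<union> affimg (cnj l) (rect a b) 1)"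
      by (rule image_mono)
    then show ?thesis
      by (simp add: image_Un cnj_image_affimg rect_cnj_image)
  qed
  ultimately show ?thesis by blast
qed

end
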